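(* Let $K$ be a planar convex body. There exists $\alpha_K\le\frac12$ such that: - $K_\alpha$ is strictly convex with nonempty interior for $0<\alpha<\alpha_K$; - $K_{\alpha_K}$ is a single point; - $K_\alpha$ is empty for $\alpha_K<\alpha<1$.
   Context: $K$ is a compact convex subset of the Euclidean plane with nonempty interior; $|K|$ is its area. Write $u(\theta)=(\cos\theta,\sin\theta)$ and $u^\perp(\theta)=(-\sin\theta,\cos\theta)$. For an oriented line $\Delta$ of direction $\theta$ through $p$: - $\Delta^+=\{x:\langle x-p,u^\perp(\theta)\rangle\ge0\}$ is its closed left half-plane; - $\Delta^-$ is its closed right half-plane. For $\alpha\in\,]0,1[$, an $\alpha$-section is an oriented line with $|\Delta^-\cap K|=\alpha|K|$. $\Delta(\alpha,\theta)$ denotes the unique $\alpha$-section of direction $\theta$. The $\alpha$-core is $K_\alpha=\bigcap_{\theta}\Delta^+(\alpha,\theta)$. A strictly convex set is a convex set whose boundary contains no nondegenerate segment. *)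

theory Defs
  imports "HOL-Analysis.Analysis"
begin

definition dir :: "real \<Rightarrow> real^2" where
  "dir \<theta> = vector [cos \<theta>, sin \<theta>]"

definition dirperp :: "real \<Rightarrow> real^2" where
  "dirperp \<theta> = vector [- sin \<theta>, cos \<theta>]"

definition left_hp :: "real^2 \<Rightarrow> real \<Rightarrow> (real^2) set" where
  "left_hp p \<theta> = {x. inner (x - p) (dirperp \<theta>) \<ge> 0}"

definition right_hp :: "real^2 \<Rightarrow> real \<Rightarrow> (real^2) set" where
  "right_hp p \<theta> = {x. inner (x - p) (dirperp \<theta>) \<le> 0}"

text \<open>An oriented line of direction \<theta> is determined by its offset
  \<open>t = \<langle>p, u\<^sup>\<perp>(\<theta>)\<rangle>\<close>; we represent it by the point \<open>t \<cdot> u\<^sup>\<perp>(\<theta>)\<close>.\<close>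
definition is_alpha_section :: "(real^2) set \<Rightarrow> real \<Rightarrow> real^2 \<Rightarrow> real \<Rightarrow> bool" where
  "is_alpha_section K \<alpha> p \<theta> \<longleftrightarrow>
     measure lebesgue (right_hp p \<theta> \<inter> K) = \<alpha> * measure lebesgue K"

definition section_offset :: "(real^2) set \<Rightarrow> real \<Rightarrow> real \<Rightarrow> real" where
  "section_offset K \<alpha> \<theta> = (THE t. is_alpha_section K \<alpha> (t *\<^sub>R dirperp \<theta>) \<theta>)"

definition alpha_core :: "(real^2) set \<Rightarrow> real \<Rightarrow> (real^2) set" where
  "alpha_core K \<alpha> = (\<Inter>\<theta>. left_hp (section_offset K \<alpha> \<theta> *\<^sub>R dirperp \<theta>) \<theta>)"

definition strictly_convex :: "(real^2) set \<Rightarrow> bool" where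
  "strictly_convex S \<longleftrightarrow> convex S \<and>
     (\<forall>a b. a \<noteq> b \<longrightarrow> \<not> closed_segment a b \<subseteq> frontier S)"

end

theory Submission
  imports Defs
begin

text \<open>
  Write \<open>F\<^sub>v(t)\<close> for the area of the part of K below the line \<open>\<langle>x, v\<rangle> = t\<close>. For \<open>0 < \<alpha> < 1\<close> a point
  x lies in \<open>K\<^sub>\<alpha>\<close> iff \<open>F\<^sub>v(\<langle>x, v\<rangle>) \<ge> \<alpha>|K|\<close> for every unit vector v; these sets are closed, convex,
  decreasing in \<open>\<alpha>\<close>, empty for \<open>\<alpha> > 1/2\<close> and contain a disc for small \<open>\<alpha>\<close>, and \<open>\<alpha>\<^sub>K\<close> is the
  supremum of the \<open>\<alpha>\<close> with \<open>K\<^sub>\<alpha> \<noteq> {}\<close>. Since \<open>F\<close> is Lipschitz in t and in v, a point of \<open>K\<^sub>\<alpha>\<close>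
  with slack in every direction is interior; this gives interior below \<open>\<alpha>\<^sub>K\<close>, and no interior
  at \<open>\<alpha>\<^sub>K\<close> (a disc in the core pushes its centre into a deeper core).

  Strict convexity: a boundary point p of \<open>K\<^sub>\<alpha>\<close> lies on an \<open>\<alpha>\<close>-section, and p is the midpoint of
  the chord that this section cuts from K. Otherwise, rotating the section slightly about p
  removes a triangle of area of order \<open>\<tau>\<rho>\<^sup>2\<close> under the long half-chord \<open>\<rho>\<close> and adds at most one of
  area of order \<open>\<tau>L\<^sup>2\<close> under the short one, so the area below drops under \<open>\<alpha>|K|\<close>. The endpoints of
  a boundary segment would lie on one section and both be the midpoint of its chord. Finally
  \<open>K\<^sub>\<alpha>\<^sub>K\<close> is nonempty by compactness, and a strictly convex set without interior is a point.
\<close>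

subsection \<open>Plane geometry\<close>

lemma inner_vec2: "inner (x::real^2) y = x$1 * y$1 + x$2 * y$2"
  by (simp add: inner_vec_def sum_2)

lemma norm_vec2_power2: "(norm (x::real^2))\<^sup>2 = (x$1)\<^sup>2 + (x$2)\<^sup>2"
  by (simp add: norm_eq_sqrt_inner inner_vec2 power2_eq_square)

lemma orthonormal_vec2_rotation:
  fixes v w :: "real^2"
  assumes v: "norm v = 1" and w: "norm w = 1" and vw: "inner v w = 0"
  defines "c \<equiv> w$2 * v$1 - w$1 * v$2"
  shows "w$1 = - c * v$2" "w$2 = c * v$1" "c\<^sup>2 = 1"
proof -
  have v2: "(v$1)\<^sup>2 + (v$2)\<^sup>2 = 1" and w2: "(w$1)\<^sup>2 + (w$2)\<^sup>2 = 1"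
    using v w by (simp_all add: norm_vec2_power2[symmetric])
  have o: "v$1 * w$1 + v$2 * w$2 = 0" using vw by (simp add: inner_vec2)
  have "- c * v$2 = w$1 * ((v$1)\<^sup>2 + (v$2)\<^sup>2) - v$1 * (v$1 * w$1 + v$2 * w$2)"
    by (simp add: c_def algebra_simps power2_eq_square)
  then show "w$1 = - c * v$2" using v2 o by simp
  have "c * v$1 = w$2 * ((v$1)\<^sup>2 + (v$2)\<^sup>2) - v$2 * (v$1 * w$1 + v$2 * w$2)"
    by (simp add: c_def algebra_simps power2_eq_square)
  then show "w$2 = c * v$1" using v2 o by simp
  have "c\<^sup>2 = ((w$1)\<^sup>2 + (w$2)\<^sup>2) * ((v$1)\<^sup>2 + (v$2)\<^sup>2) - (v$1 * w$1 + v$2 * w$2)\<^sup>2"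
    by (simp add: c_def algebra_simps power2_eq_square)
  then show "c\<^sup>2 = 1" using v2 w2 o by simp
qed

lemma orthonormal_vec2_expand:
  fixes v w :: "real^2"
  assumes "norm v = 1" "norm w = 1" "inner v w = 0"
  shows "x = inner x w *\<^sub>R w + inner x v *\<^sub>R v"
proof -
  obtain c where w1: "w$1 = - c * v$2" and w2: "w$2 = c * v$1" and c: "c\<^sup>2 = 1"
    using orthonormal_vec2_rotation[OF assms] by blast
  have v: "(v$1)\<^sup>2 + (v$2)\<^sup>2 = 1" using assms(1) by (simp add: norm_vec2_power2[symmetric])
  have "(inner x w *\<^sub>R w + inner x v *\<^sub>R v)$1 = x$1 * (c\<^sup>2 * (v$2)\<^sup>2 + (v$1)\<^sup>2) + x$2 * v$1 * v$2 * (1 - c\<^sup>2)"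
    by (simp add: inner_vec2 w1 w2 algebra_simps power2_eq_square)
  moreover have "(inner x w *\<^sub>R w + inner x v *\<^sub>R v)$2 = x$2 * (c\<^sup>2 * (v$1)\<^sup>2 + (v$2)\<^sup>2) + x$1 * v$1 * v$2 * (1 - c\<^sup>2)"
    by (simp add: inner_vec2 w1 w2 algebra_simps power2_eq_square)
  ultimately show ?thesis using c v by (simp add: vec_eq_iff forall_2 add.commute)
qed

lemma unit_vec2_orthogonal_unit:
  assumes "norm (v::real^2) = 1" obtains w where "norm w = 1" "inner v w = 0"
proof
  have "(norm (vector [- v$2, v$1] :: real^2))\<^sup>2 = (norm v)\<^sup>2"
    by (simp add: norm_vec2_power2)
  then show "norm (vector [- v$2, v$1] :: real^2) = 1"
    using assms norm_ge_zero[of "vector [- v$2, v$1] :: real^2"] by (auto simp: power2_eq_1_iff)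
  show "inner v (vector [- v$2, v$1]) = 0" by (simp add: inner_vec2)
qed

lemma dirperp_unit: "norm (dirperp \<theta>) = 1"
proof -
  have "(norm (dirperp \<theta>))\<^sup>2 = 1" by (simp add: norm_vec2_power2 dirperp_def)
  then show ?thesis using norm_ge_zero[of "dirperp \<theta>"] by (simp add: power2_eq_1_iff)
qed

lemma unit_vec2_eq_dirperp:
  assumes "norm (v::real^2) = 1" obtains \<theta> where "v = dirperp \<theta>"
proof -
  have "(v$2)\<^sup>2 + (- v$1)\<^sup>2 = 1" using assms norm_vec2_power2[of v] by simp
  then obtain \<theta> where "v$2 = cos \<theta>" "- v$1 = sin \<theta>" by (rule sincos_total_2pi)
  then have "v = dirperp \<theta>" by (auto simp: dirperp_def vec_eq_iff forall_2)
  then show ?thesis by (rule that)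
qed

lemma mem_convex_hull_3_offsets:
  "x \<in> convex hull {a, a + X, a + Y} \<longleftrightarrow>
     (\<exists>l1 l2. 0 \<le> l1 \<and> 0 \<le> l2 \<and> l1 + l2 \<le> 1 \<and> x = a + l1 *\<^sub>R X + l2 *\<^sub>R Y)"
proof -
  have comb: "u *\<^sub>R a + v *\<^sub>R (a + X) + w *\<^sub>R (a + Y) = a + v *\<^sub>R X + w *\<^sub>R Y"
    if "u + v + w = 1" for u v w :: real
  proof -
    have "u *\<^sub>R a + v *\<^sub>R (a + X) + w *\<^sub>R (a + Y) = (u + v + w) *\<^sub>R a + v *\<^sub>R X + w *\<^sub>R Y"
      by (simp add: scaleR_add_right scaleR_add_left)
    then show ?thesis using that by simp
  qed
  show ?thesis
  proof
    assume "x \<in> convex hull {a, a + X, a + Y}"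
    then obtain u v w where "0 \<le> u" "0 \<le> v" "0 \<le> w" "u + v + w = 1"
      "x = u *\<^sub>R a + v *\<^sub>R (a + X) + w *\<^sub>R (a + Y)"
      unfolding convex_hull_3 by blast
    then show "\<exists>l1 l2. 0 \<le> l1 \<and> 0 \<le> l2 \<and> l1 + l2 \<le> 1 \<and> x = a + l1 *\<^sub>R X + l2 *\<^sub>R Y"
      using comb by (intro exI[of _ v] exI[of _ w]) auto
  next
    assume "\<exists>l1 l2. 0 \<le> l1 \<and> 0 \<le> l2 \<and> l1 + l2 \<le> 1 \<and> x = a + l1 *\<^sub>R X + l2 *\<^sub>R Y"
    then obtain l1 l2 where "0 \<le> l1" "0 \<le> l2" "l1 + l2 \<le> 1" "x = a + l1 *\<^sub>R X + l2 *\<^sub>R Y"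
      by blast
    then show "x \<in> convex hull {a, a + X, a + Y}"
      unfolding convex_hull_3 using comb[of "1 - l1 - l2" l1 l2]
      by (intro CollectI exI[of _ "1 - l1 - l2"] exI[of _ l1] exI[of _ l2]) auto
  qed
qed

lemma convex_hull_3_inner_pos:
  fixes p e q x :: "'a::real_inner"
  assumes "0 < inner (e - p) n" "0 < inner (q - p) n"
    and "x \<in> convex hull {p, e, q}" "inner (x - p) n \<le> 0"
  shows "x = p"
proof -
  have "x \<in> convex hull {p, p + (e - p), p + (q - p)}" using assms(3) by simp
  then obtain l1 l2 where l: "0 \<le> l1" "0 \<le> l2" "x = p + l1 *\<^sub>R (e - p) + l2 *\<^sub>R (q - p)"
    unfolding mem_convex_hull_3_offsets by blast
  then have "l1 * inner (e - p) n + l2 * inner (q - p) n \<le> 0"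
    using assms(4) by (simp add: inner_add_left)
  with l(1,2) assms(1,2) have "l1 = 0" "l2 = 0"
    by (smt (verit) mult_nonneg_nonneg mult_pos_pos)+
  then show ?thesis using l(3) by simp
qed

lemma triangle_lmeasurable: "convex hull {a, b, c::real^2} \<in> lmeasurable"
  by (intro lmeasurable_compact finite_imp_compact_convex_hull) auto

lemma measure_triangle_vec2:
  "measure lebesgue (convex hull {a, a + X, a + Y::real^2}) = \<bar>X$1 * Y$2 - X$2 * Y$1\<bar> / 2"
proof -
  have "measure lebesgue (convex hull {a, a + X, a + Y}) = measure lborel (convex hull {a, a + X, a + Y})"
    by (intro measure_completion) (auto intro!: borel_closed compact_imp_closed finite_imp_compact_convex_hull)
  also have "\<dots> = \<bar>X$1 * Y$2 - X$2 * Y$1\<bar> / 2"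
    unfolding content_triangle by (simp add: abs_minus_commute mult.commute)
  finally show ?thesis .
qed

lemma measure_triangle_orthonormal:
  fixes v w :: "real^2"
  assumes "norm v = 1" "norm w = 1" "inner v w = 0"
  shows "measure lebesgue (convex hull {p, p + (a *\<^sub>R w + b *\<^sub>R v), p + (c *\<^sub>R w + d *\<^sub>R v)}) =
    \<bar>a * d - b * c\<bar> / 2"
proof -
  obtain k where w1: "w$1 = - k * v$2" and w2: "w$2 = k * v$1" and k: "k\<^sup>2 = 1"
    using orthonormal_vec2_rotation[OF assms] by blast
  have v: "(v$1)\<^sup>2 + (v$2)\<^sup>2 = 1" using assms(1) by (simp add: norm_vec2_power2[symmetric])
  have "\<bar>k\<bar> = 1" using k by (auto simp: power2_eq_1_iff)
  moreover have "(a *\<^sub>R w + b *\<^sub>R v)$1 * (c *\<^sub>R w + d *\<^sub>R v)$2 - (a *\<^sub>R w + b *\<^sub>R v)$2 * (c *\<^sub>R w + d *\<^sub>R v)$1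
      = - k * (a * d - b * c) * ((v$1)\<^sup>2 + (v$2)\<^sup>2)"
    by (simp add: w1 w2 algebra_simps power2_eq_square)
  ultimately show ?thesis by (simp add: measure_triangle_vec2 v abs_mult)
qed

lemma measure_le_rectangle_orthonormal:
  fixes v w :: "real^2"
  assumes v: "norm v = 1" and w: "norm w = 1" "inner v w = 0"
    and S: "S \<in> sets lebesgue" "S \<subseteq> {x. \<bar>inner x w\<bar> \<le> R \<and> t < inner x v \<and> inner x v \<le> t'}"
    and "0 < R" "t < t'"
  shows "measure lebesgue S \<le> 2 * R * (t' - t)"
proof -
  define P where "P = t *\<^sub>R v - R *\<^sub>R w"
  define X where "X = (2 * R) *\<^sub>R w + 0 *\<^sub>R v"
  define Y where "Y = 0 *\<^sub>R w + (t' - t) *\<^sub>R v"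
  define Q where "Q = P + X + Y"
  define T1 where "T1 = convex hull {P, P + X, P + Y}"
  define T2 where "T2 = convex hull {Q, Q + (0 *\<^sub>R w + (- (t' - t)) *\<^sub>R v), Q + ((- (2 * R)) *\<^sub>R w + 0 *\<^sub>R v)}"
  have "S \<subseteq> T1 \<union> T2"
  proof
    fix x assume "x \<in> S"
    then have x: "\<bar>inner x w\<bar> \<le> R" "t < inner x v" "inner x v \<le> t'" using S(2) by auto
    define a b where "a = (inner x w + R) / (2 * R)" and "b = (inner x v - t) / (t' - t)"
    have ab: "0 \<le> a" "a \<le> 1" "0 \<le> b" "b \<le> 1"
      using x assms(6,7) by (auto simp: a_def b_def field_simps)
    have "P + a *\<^sub>R X + b *\<^sub>R Y = (a * (2 * R) - R) *\<^sub>R w + (t + b * (t' - t)) *\<^sub>R v"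
      by (simp add: P_def X_def Y_def algebra_simps)
    also have "\<dots> = inner x w *\<^sub>R w + inner x v *\<^sub>R v"
      using assms(6,7) by (simp add: a_def b_def)
    finally have xe: "x = P + a *\<^sub>R X + b *\<^sub>R Y"
      using orthonormal_vec2_expand[OF v w, of x] by simp
    show "x \<in> T1 \<union> T2"
    proof (cases "a + b \<le> 1")
      case True
      then show ?thesis using ab xe by (auto simp: T1_def mem_convex_hull_3_offsets)
    next
      case False
      have "x = Q + (1 - b) *\<^sub>R (0 *\<^sub>R w + (- (t' - t)) *\<^sub>R v) + (1 - a) *\<^sub>R ((- (2 * R)) *\<^sub>R w + 0 *\<^sub>R v)"
        unfolding xe Q_def X_def Y_def by (simp add: algebra_simps)
      then have "x \<in> T2" using ab False unfolding T2_def mem_convex_hull_3_offsets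
        by (intro exI[of _ "1 - b"] exI[of _ "1 - a"]) auto
      then show ?thesis by simp
    qed
  qed
  then have "measure lebesgue S \<le> measure lebesgue T1 + measure lebesgue T2"
    using S(1) triangle_lmeasurable unfolding T1_def T2_def
    by (intro order.trans[OF measure_mono_fmeasurable measure_Un_le]) (auto intro: fmeasurable.Un)
  also have "\<dots> = 2 * R * (t' - t)"
    unfolding T1_def T2_def Q_def X_def Y_def measure_triangle_orthonormal[OF v w]
    using assms(6,7) by (simp add: abs_mult)
  finally show ?thesis .
qed

lemma ball_measure_pos: "0 < r \<Longrightarrow> 0 < measure lebesgue (ball (c::'a::euclidean_space) r)"
  using content_ball_pos[of r c] by (simp add: measure_completion)

lemma measure_subset_diff_add:
  fixes N H T D :: "'a::euclidean_space set"
  assumes "N \<subseteq> (H - T) \<union> {p} \<union> D" "T \<subseteq> H"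
    and "N \<in> lmeasurable" "H \<in> lmeasurable" "T \<in> lmeasurable" "D \<in> lmeasurable"
  shows "measure lebesgue N \<le> measure lebesgue H - measure lebesgue T + measure lebesgue D"
proof -
  have HT: "H - T \<in> lmeasurable" using assms(4,5) by (rule fmeasurable_Diff[OF _ fmeasurableD])
  have p: "{p} \<in> lmeasurable" by (rule lmeasurable_compact) simp
  have HTp: "(H - T) \<union> {p} \<in> lmeasurable" using HT p by (rule fmeasurable.Un)
  have "measure lebesgue N \<le> measure lebesgue ((H - T) \<union> {p} \<union> D)"
    using assms HTp by (intro measure_mono_fmeasurable fmeasurableD fmeasurable.Un[OF HTp]) auto
  also have "\<dots> \<le> measure lebesgue ((H - T) \<union> {p}) + measure lebesgue D"
    using HTp assms(6) by (intro measure_Un_le) auto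
  also have "measure lebesgue ((H - T) \<union> {p}) \<le> measure lebesgue (H - T) + measure lebesgue {p}"
    using HT p by (intro measure_Un_le) auto
  also have "measure lebesgue (H - T) = measure lebesgue H - measure lebesgue T"
    using assms(2) fmeasurableD2[OF assms(4)] by (intro measure_Diff fmeasurableD[OF assms(4)] fmeasurableD[OF assms(5)]) auto
  finally show ?thesis by simp
qed

lemma eventually_at_right_0_mult_less:
  "0 < e \<Longrightarrow> \<forall>\<^sub>F \<tau> in at_right (0::real). \<tau> * c < e"
  by (rule order_tendstoD(2)[OF tendsto_mult_left_zero[OF tendsto_ident_at], of e c]) simp

lemma strictly_convex_interior_empty_imp_subsingleton:
  assumes "strictly_convex S" "interior S = {}" "x \<in> S" "y \<in> S"
  shows "x = y"
proof (rule ccontr)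
  assume "x \<noteq> y"
  have "closed_segment x y \<subseteq> S"
    using assms(1,3,4) by (simp add: strictly_convex_def closed_segment_subset)
  also have "S \<subseteq> frontier S"
    using assms(2) closure_subset by (auto simp: frontier_def)
  finally show False using assms(1) \<open>x \<noteq> y\<close> by (simp add: strictly_convex_def)
qed

locale convex_body =
  fixes K :: "(real^2) set"
  assumes compact_K: "compact K" and convex_K: "convex K" and interior_K: "interior K \<noteq> {}"
begin

definition area :: real where "area = measure lebesgue K"

definition cut_area :: "real^2 \<Rightarrow> real \<Rightarrow> real" where
  "cut_area v t = measure lebesgue (K \<inter> {x. inner x v \<le> t})"

definition radius :: real where "radius = (SOME R. 0 < R \<and> (\<forall>x\<in>K. norm x \<le> R))"

subsection \<open>Areas cut off by half-planes\<close>

lemma radius_pos: "0 < radius" and norm_le_radius: "x \<in> K \<Longrightarrow> norm x \<le> radius"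
proof -
  have "\<exists>R. 0 < R \<and> (\<forall>x\<in>K. norm x \<le> R)"
    using compact_imp_bounded[OF compact_K] bounded_pos by blast
  then have "0 < radius \<and> (\<forall>x\<in>K. norm x \<le> radius)" unfolding radius_def by (rule someI_ex)
  then show "0 < radius" "x \<in> K \<Longrightarrow> norm x \<le> radius" by auto
qed

lemma abs_inner_le_radius: "x \<in> K \<Longrightarrow> norm v = 1 \<Longrightarrow> \<bar>inner x v\<bar> \<le> radius"
  using Cauchy_Schwarz_ineq2[of x v] norm_le_radius[of x] by simp

lemma abs_inner_diff_le_radius:
  "x \<in> K \<Longrightarrow> p \<in> K \<Longrightarrow> norm w = 1 \<Longrightarrow> \<bar>inner (x - p) w\<bar> \<le> 2 * radius"
  using abs_inner_le_radius[of x w] abs_inner_le_radius[of p w] by (simp add: inner_diff_left)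

lemma K_lmeasurable: "K \<in> lmeasurable"
  by (rule lmeasurable_compact[OF compact_K])

lemma cut_lmeasurable: "K \<inter> {x. inner x v \<le> t} \<in> lmeasurable"
  using closed_halfspace_le[of v t]
  by (intro lmeasurable_compact compact_Int_closed compact_K) (simp add: inner_commute)

lemma cut_at_point_lmeasurable: "K \<inter> {x. inner (x - p) v \<le> 0} \<in> lmeasurable"
  using cut_lmeasurable[of v "inner p v"] by (simp add: inner_diff_left)

lemma slab_lmeasurable: "K \<inter> {x. t < inner x v \<and> inner x v \<le> t'} \<in> lmeasurable"
proof -
  have "K \<inter> {x. t < inner x v \<and> inner x v \<le> t'} = (K \<inter> {x. inner x v \<le> t'}) - (K \<inter> {x. inner x v \<le> t})"
    by auto
  then show ?thesis by (simp only: fmeasurable_Diff[OF cut_lmeasurable fmeasurableD[OF cut_lmeasurable]])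
qed

lemma measure_le_area: "S \<subseteq> K \<Longrightarrow> S \<in> sets lebesgue \<Longrightarrow> measure lebesgue S \<le> area"
  unfolding area_def using K_lmeasurable by (intro measure_mono_fmeasurable) auto

lemma area_pos: "0 < area"
proof -
  obtain c r where "0 < r" "ball c r \<subseteq> K" using interior_K by (auto simp: mem_interior)
  moreover from this have "measure lebesgue (ball c r) \<le> area" by (intro measure_le_area) auto
  ultimately show ?thesis using ball_measure_pos[of r c] by linarith
qed

lemma cut_area_nonneg: "0 \<le> cut_area v t"
  by (simp add: cut_area_def)

lemma cut_area_mono: "t \<le> t' \<Longrightarrow> cut_area v t \<le> cut_area v t'"
  unfolding cut_area_def using cut_lmeasurable by (intro measure_mono_fmeasurable) auto

lemma cut_area_eq_0: "(\<And>x. x \<in> K \<Longrightarrow> t < inner x v) \<Longrightarrow> cut_area v t = 0"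
proof -
  assume "\<And>x. x \<in> K \<Longrightarrow> t < inner x v"
  then have "K \<inter> {x. inner x v \<le> t} = {}" by force
  then show ?thesis by (simp add: cut_area_def)
qed

lemma cut_area_eq_area: "(\<And>x. x \<in> K \<Longrightarrow> inner x v \<le> t) \<Longrightarrow> cut_area v t = area"
proof -
  assume "\<And>x. x \<in> K \<Longrightarrow> inner x v \<le> t"
  then have "K \<inter> {x. inner x v \<le> t} = K" by force
  then show ?thesis by (simp add: cut_area_def area_def)
qed

lemma cut_area_diff:
  assumes "t \<le> t'"
  shows "cut_area v t' - cut_area v t = measure lebesgue (K \<inter> {x. t < inner x v \<and> inner x v \<le> t'})"
proof -
  have "K \<inter> {x. t < inner x v \<and> inner x v \<le> t'} = (K \<inter> {x. inner x v \<le> t'}) - (K \<inter> {x. inner x v \<le> t})"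
    by auto
  moreover have "measure lebesgue ((K \<inter> {x. inner x v \<le> t'}) - (K \<inter> {x. inner x v \<le> t})) =
      cut_area v t' - cut_area v t"
    unfolding cut_area_def using assms fmeasurableD2[OF cut_lmeasurable]
    by (intro measure_Diff fmeasurableD[OF cut_lmeasurable]) auto
  ultimately show ?thesis by simp
qed

lemma slab_measure_le:
  assumes v: "norm v = 1" and "t \<le> t'"
  shows "measure lebesgue (K \<inter> {x. t < inner x v \<and> inner x v \<le> t'}) \<le> 2 * radius * (t' - t)"
proof (cases "t < t'")
  case False
  then have "K \<inter> {x. t < inner x v \<and> inner x v \<le> t'} = {}" by auto
  then show ?thesis using \<open>t \<le> t'\<close> radius_pos by simp
next
  case True
  obtain w where w: "norm w = 1" "inner v w = 0" by (rule unit_vec2_orthogonal_unit[OF v])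
  show ?thesis
    using abs_inner_le_radius w(1) slab_lmeasurable radius_pos True
    by (intro measure_le_rectangle_orthonormal[OF v w]) auto
qed

lemma cut_area_lipschitz:
  "norm v = 1 \<Longrightarrow> t \<le> t' \<Longrightarrow> cut_area v t' \<le> cut_area v t + 2 * radius * (t' - t)"
  using cut_area_diff[of t t' v] slab_measure_le[of v t t'] by simp

lemma dist_cut_area_le: "norm v = 1 \<Longrightarrow> dist (cut_area v t) (cut_area v t') \<le> 2 * radius * dist t t'"
  using cut_area_lipschitz[of v t t'] cut_area_lipschitz[of v t' t]
    cut_area_mono[of t t' v] cut_area_mono[of t' t v]
  by (cases "t \<le> t'") (auto simp: dist_real_def abs_if)

lemma continuous_cut_area: "norm v = 1 \<Longrightarrow> continuous_on UNIV (cut_area v)"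
  using radius_pos dist_cut_area_le
  by (intro lipschitz_on_continuous_on[of "2 * radius"] lipschitz_onI) auto

lemma cut_area_at_point_le:
  assumes "norm v = 1"
  shows "cut_area v (inner x v) \<le> cut_area v (inner y v) + 2 * radius * norm (x - y)"
proof -
  have "inner x v - norm (x - y) \<le> inner y v"
    using Cauchy_Schwarz_ineq2[of "x - y" v] assms by (simp add: inner_diff_left abs_le_iff)
  then have "cut_area v (inner x v - norm (x - y)) \<le> cut_area v (inner y v)"
    by (rule cut_area_mono)
  moreover have "cut_area v (inner x v) \<le> cut_area v (inner x v - norm (x - y)) + 2 * radius * norm (x - y)"
    using cut_area_lipschitz[OF assms, of "inner x v - norm (x - y)" "inner x v"] by simp
  ultimately show ?thesis by linarith
qed

lemma cut_area_direction_le: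
  assumes "norm v = 1" "norm v' = 1"
  shows "cut_area v t \<le> cut_area v' t + 2 * radius\<^sup>2 * norm (v - v')"
proof -
  define \<delta> where "\<delta> = radius * norm (v - v')"
  have "K \<inter> {x. inner x v \<le> t - \<delta>} \<subseteq> K \<inter> {x. inner x v' \<le> t}"
  proof clarify
    fix x assume x: "x \<in> K" "inner x v \<le> t - \<delta>"
    have "\<bar>inner x (v' - v)\<bar> \<le> norm x * norm (v' - v)" by (rule Cauchy_Schwarz_ineq2)
    also have "\<dots> \<le> \<delta>"
      using norm_le_radius[OF x(1)] by (simp add: \<delta>_def norm_minus_commute mult_right_mono)
    finally have "\<bar>inner x (v' - v)\<bar> \<le> \<delta>" .
    then show "inner x v' \<le> t" using x(2) by (simp add: inner_diff_right abs_le_iff)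
  qed
  then have "cut_area v (t - \<delta>) \<le> cut_area v' t"
    unfolding cut_area_def using cut_lmeasurable by (intro measure_mono_fmeasurable) auto
  moreover have "cut_area v t \<le> cut_area v (t - \<delta>) + 2 * radius * \<delta>"
    using cut_area_lipschitz[OF assms(1), of "t - \<delta>" t] radius_pos by (simp add: \<delta>_def)
  ultimately show ?thesis by (simp add: \<delta>_def power2_eq_square algebra_simps)
qed

lemma cut_area_pos_imp_below:
  assumes v: "norm v = 1" and "0 < cut_area v t"
  obtains z where "z \<in> K" "inner z v < t"
proof (rule ccontr)
  assume "\<not> thesis"
  with that have "t \<le> inner z v" if "z \<in> K" for z using \<open>z \<in> K\<close> by force
  then have "K \<inter> {x. inner x v \<le> t} \<subseteq> {x. inner v x = t}"
    by (auto simp: inner_commute intro: antisym)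
  moreover have "negligible {x. inner v x = t}" using v by (intro negligible_hyperplane) auto
  ultimately have "cut_area v t = 0"
    unfolding cut_area_def by (metis negligible_subset negligible_imp_measure0)
  then show False using assms by simp
qed

lemma cut_area_strict_mono:
  assumes v: "norm v = 1" and tt: "t < t'" and "0 < cut_area v t" and "cut_area v t' < area"
  shows "cut_area v t < cut_area v t'"
proof -
  obtain x1 where x1: "x1 \<in> K" "inner x1 v < t" by (rule cut_area_pos_imp_below[OF v assms(3)])
  obtain x2 where x2: "x2 \<in> K" "t' < inner x2 v"
    using assms(4) cut_area_eq_area[of v t'] by force
  define s where "s = (t + t') / 2"
  obtain y where y: "y \<in> K" "inner y v = s"
    using connected_ivt_hyperplane[OF convex_connected[OF convex_K] x1(1) x2(1), of v s] x1 x2 tt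
    by (auto simp: s_def inner_commute)
  have "y \<in> closure (interior K)"
    using y(1) closure_subset convex_closure_interior[OF convex_K interior_K] by blast
  then obtain y' where y': "y' \<in> interior K" "dist y' y < (t' - t) / 2"
    using tt unfolding closure_approachable by (metis diff_gt_0_iff_gt half_gt_zero)
  have "\<bar>inner y' v - s\<bar> < (t' - t) / 2"
    using Cauchy_Schwarz_ineq2[of "y' - y" v] v y' y(2) by (simp add: dist_norm inner_diff_left)
  then have "y' \<in> interior K \<inter> {x. t < inner x v} \<inter> {x. inner x v < t'}"
    using y'(1) unfolding s_def by (auto simp: abs_less_iff field_simps)
  moreover have "open (interior K \<inter> {x. t < inner x v} \<inter> {x. inner x v < t'})"
    using open_halfspace_gt[of t v] open_halfspace_lt[of v t']
    by (intro open_Int open_interior) (auto simp: inner_commute)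
  ultimately obtain e where e: "0 < e" "ball y' e \<subseteq> interior K \<inter> {x. t < inner x v} \<inter> {x. inner x v < t'}"
    by (meson openE)
  then have "ball y' e \<subseteq> K \<inter> {x. t < inner x v \<and> inner x v \<le> t'}"
    using interior_subset by fastforce
  then have "measure lebesgue (ball y' e) \<le> cut_area v t' - cut_area v t"
    unfolding cut_area_diff[OF less_imp_le[OF tt]]
    using slab_lmeasurable by (intro measure_mono_fmeasurable) auto
  then show ?thesis using ball_measure_pos[OF e(1), of y'] by linarith
qed

lemma cut_area_level_unique:
  assumes v: "norm v = 1" and c: "0 < c" "c < area"
  shows "\<exists>!t. cut_area v t = c"
proof (rule ex_ex1I)
  have "cut_area v (- radius - 1) = 0"
    by (rule cut_area_eq_0) (use abs_inner_le_radius v in \<open>force simp: abs_le_iff\<close>)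
  moreover have "cut_area v radius = area"
    by (rule cut_area_eq_area) (use abs_inner_le_radius v in \<open>force simp: abs_le_iff\<close>)
  ultimately show "\<exists>t. cut_area v t = c"
    using IVT'[of "cut_area v" "- radius - 1" c radius] c radius_pos
      continuous_on_subset[OF continuous_cut_area[OF v]] by force
next
  fix t1 t2 assume "cut_area v t1 = c" "cut_area v t2 = c"
  then show "t1 = t2"
    using cut_area_strict_mono[OF v, of t1 t2] cut_area_strict_mono[OF v, of t2 t1] c
    by (cases t1 t2 rule: linorder_cases) auto
qed

lemma cut_area_ge_iff:
  assumes v: "norm v = 1" and c: "0 < c" "c < area" and h: "cut_area v h = c"
  shows "c \<le> cut_area v s \<longleftrightarrow> h \<le> s"
proof
  assume s: "c \<le> cut_area v s"
  show "h \<le> s"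
  proof (rule ccontr)
    assume "\<not> h \<le> s"
    then have "cut_area v s < cut_area v h"
      using c h s by (intro cut_area_strict_mono[OF v]) auto
    then show False using s h by simp
  qed
qed (use cut_area_mono h in blast)

subsection \<open>Cores\<close>

definition core :: "real \<Rightarrow> (real^2) set" where
  "core a = {x. \<forall>v. norm v = 1 \<longrightarrow> a * area \<le> cut_area v (inner x v)}"

lemma alpha_core_eq_core:
  assumes a: "0 < a" "a < 1"
  shows "alpha_core K a = core a"
proof -
  have aA: "0 < a * area" "a * area < area" using a area_pos by auto
  have right: "right_hp (t *\<^sub>R dirperp \<theta>) \<theta> = {x. inner x (dirperp \<theta>) \<le> t}"
    and left: "left_hp (t *\<^sub>R dirperp \<theta>) \<theta> = {x. t \<le> inner x (dirperp \<theta>)}" for t \<theta>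
    using dirperp_unit[of \<theta>]
    by (auto simp: right_hp_def left_hp_def inner_diff_left dot_square_norm)
  have offset: "cut_area (dirperp \<theta>) (section_offset K a \<theta>) = a * area" for \<theta>
  proof -
    have "is_alpha_section K a (t *\<^sub>R dirperp \<theta>) \<theta> \<longleftrightarrow> cut_area (dirperp \<theta>) t = a * area" for t
      by (simp add: is_alpha_section_def right cut_area_def area_def Int_commute)
    then show ?thesis unfolding section_offset_def
      using theI'[OF cut_area_level_unique[OF dirperp_unit aA]] by simp
  qed
  have all_dirperp: "(\<forall>\<theta>. P (dirperp \<theta>)) \<longleftrightarrow> (\<forall>v. norm v = 1 \<longrightarrow> P v)" for P
    by (metis dirperp_unit unit_vec2_eq_dirperp)
  have "x \<in> alpha_core K a \<longleftrightarrow> (\<forall>\<theta>. a * area \<le> cut_area (dirperp \<theta>) (inner x (dirperp \<theta>)))" for x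
    using cut_area_ge_iff[OF dirperp_unit aA offset] by (simp add: alpha_core_def left)
  then show ?thesis
    using all_dirperp[of "\<lambda>v. a * area \<le> cut_area v (inner _ v)"] by (auto simp: core_def)
qed

lemma core_cut_area_ge: "x \<in> core a \<Longrightarrow> norm v = 1 \<Longrightarrow> a * area \<le> cut_area v (inner x v)"
  by (simp add: core_def)

lemma core_eq_Inter: "core a = (\<Inter>v\<in>sphere 0 1. {x. a * area \<le> cut_area v (inner x v)})"
  by (auto simp: core_def)

lemma closed_core: "closed (core a)"
proof -
  have "closed {x. a * area \<le> cut_area v (inner x v)}" if "norm v = 1" for v
  proof -
    have "continuous_on UNIV (\<lambda>x. cut_area v (inner x v))"
      using that by (intro continuous_on_compose2[OF continuous_cut_area] continuous_intros) auto
    then show ?thesis by (intro closed_Collect_le) (auto intro: continuous_intros)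
  qed
  then show ?thesis unfolding core_eq_Inter by (intro closed_INT) simp
qed

lemma convex_core: "convex (core a)"
  unfolding core_eq_Inter
proof (intro convex_INT convexI)
  fix v x y :: "real^2" and u w :: real
  assume x: "x \<in> {x. a * area \<le> cut_area v (inner x v)}" and y: "y \<in> {x. a * area \<le> cut_area v (inner x v)}"
    and u: "0 \<le> u" "0 \<le> w" "u + w = 1"
  have "u * (- inner x v) + w * (- inner y v) \<le> - min (inner x v) (inner y v)"
    by (rule convex_bound_le) (use u in auto)
  then have "min (inner x v) (inner y v) \<le> inner (u *\<^sub>R x + w *\<^sub>R y) v"
    by (simp add: inner_add_left)
  then have "cut_area v (min (inner x v) (inner y v)) \<le> cut_area v (inner (u *\<^sub>R x + w *\<^sub>R y) v)"
    by (rule cut_area_mono)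
  moreover have "a * area \<le> cut_area v (min (inner x v) (inner y v))"
    using x y by (simp add: min_def)
  ultimately show "u *\<^sub>R x + w *\<^sub>R y \<in> {x. a * area \<le> cut_area v (inner x v)}" by simp
qed

lemma core_antimono: "a \<le> b \<Longrightarrow> core b \<subseteq> core a"
  unfolding core_def using area_pos by (auto intro: order.trans[OF mult_right_mono])

lemma core_subset: assumes "0 < a" shows "core a \<subseteq> K"
proof
  fix x assume x: "x \<in> core a"
  show "x \<in> K"
  proof (rule ccontr)
    assume "x \<notin> K"
    then obtain p b where pb: "inner p x < b" "\<forall>y\<in>K. b < inner p y"
      using separating_hyperplane_closed_point[OF convex_K compact_imp_closed[OF compact_K]] by blast
    then have p: "p \<noteq> 0" using interior_K interior_subset by fastforce
    define v where "v = (1 / norm p) *\<^sub>R p"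
    have v: "norm v = 1" using p by (simp add: v_def)
    have "cut_area v (inner x v) = 0"
    proof (rule cut_area_eq_0)
      fix y assume "y \<in> K"
      then have "inner p x < inner p y" using pb by force
      then show "inner x v < inner y v" using p by (simp add: v_def inner_commute divide_strict_right_mono)
    qed
    moreover have "a * area \<le> cut_area v (inner x v)" using x v by (auto simp: core_def)
    ultimately show False using assms area_pos by (simp add: mult_le_0_iff)
  qed
qed

lemma compact_core: "0 < a \<Longrightarrow> compact (core a)"
  using compact_Int_closed[OF compact_K closed_core] core_subset by (metis inf.absorb2)

lemma core_empty_above_half: assumes "1/2 < a" shows "core a = {}"
proof (rule ccontr)
  assume "core a \<noteq> {}"
  then obtain x where x: "x \<in> core a" by auto
  obtain v :: "real^2" where v: "norm v = 1" using norm_axis_1 by blast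
  define s where "s = inner x v"
  have below: "a * area \<le> cut_area v s" using x v by (auto simp: core_def s_def)
  have "a * area \<le> cut_area (- v) (inner x (- v))" using x v by (intro core_cut_area_ge) auto
  then have above: "a * area \<le> cut_area (- v) (- s)" by (simp add: s_def)
  define e where "e = (2 * a - 1) * area / (4 * radius)"
  have e: "0 < e" using assms area_pos radius_pos by (simp add: e_def)
  have up: "K \<inter> {y. inner y (- v) \<le> - s} = K \<inter> {y. s \<le> inner y v}" by auto
  have "cut_area v (s - e) \<le> measure lebesgue (K - (K \<inter> {y. s \<le> inner y v}))"
    unfolding cut_area_def using e cut_lmeasurable cut_lmeasurable[of "- v" "- s", unfolded up]
    by (intro measure_mono_fmeasurable) (auto intro!: fmeasurable_Diff[OF K_lmeasurable])
  also have "\<dots> = area - cut_area (- v) (- s)"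
    unfolding cut_area_def area_def up[symmetric] using fmeasurableD2[OF K_lmeasurable]
    by (intro measure_Diff fmeasurableD[OF cut_lmeasurable] fmeasurableD[OF K_lmeasurable]) auto
  finally have "cut_area v (s - e) \<le> area - cut_area (- v) (- s)" .
  moreover have "cut_area v s \<le> cut_area v (s - e) + 2 * radius * e"
    using cut_area_lipschitz[OF v, of "s - e" s] e by simp
  moreover have "2 * radius * e = (2 * a - 1) * area / 2" using radius_pos by (simp add: e_def)
  ultimately have "2 * (a * area) \<le> area + (2 * a - 1) * area / 2" using below above by linarith
  then show False using assms area_pos by (simp add: algebra_simps field_simps)
qed

lemma cball_subset_core:
  assumes "\<And>v. norm v = 1 \<Longrightarrow> a * area + \<delta> \<le> cut_area v (inner x v)"
  shows "cball x (\<delta> / (2 * radius)) \<subseteq> core a"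
proof (clarsimp simp: core_def)
  fix y v :: "real^2" assume y: "dist x y \<le> \<delta> / (2 * radius)" and v: "norm v = 1"
  have "a * area + \<delta> \<le> cut_area v (inner y v) + 2 * radius * norm (x - y)"
    using assms[OF v] cut_area_at_point_le[OF v, of x y] by linarith
  moreover have "2 * radius * norm (x - y) \<le> \<delta>"
    using y radius_pos by (simp add: dist_norm field_simps)
  ultimately show "a * area \<le> cut_area v (inner y v)" by linarith
qed

lemma cball_subset_core_gap:
  assumes "a < b" "x \<in> core b"
  shows "cball x ((b - a) * area / (2 * radius)) \<subseteq> core a"
  using assms by (intro cball_subset_core) (auto simp: core_def algebra_simps)

lemma cut_area_gain_at_ball:
  assumes r: "0 < r" "cball c r \<subseteq> K" and v: "norm v = 1"
  shows "cut_area v (inner c v - r/2) + r\<^sup>2 / 8 \<le> cut_area v (inner c v)"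
proof -
  obtain w where w: "norm w = 1" "inner v w = 0" by (rule unit_vec2_orthogonal_unit[OF v])
  define X where "X = (r/2) *\<^sub>R w + (- r/4) *\<^sub>R v"
  define Y where "Y = (- r/2) *\<^sub>R w + (- r/4) *\<^sub>R v"
  define S where "S = cball c r \<inter> {x. inner c v - r/2 < inner x v \<and> inner x v \<le> inner c v}"
  have "norm X \<le> 3/4 * r" "norm Y \<le> 3/4 * r"
    using norm_triangle_ineq[of "(r/2) *\<^sub>R w" "(- r/4) *\<^sub>R v"]
      norm_triangle_ineq[of "(- r/2) *\<^sub>R w" "(- r/4) *\<^sub>R v"] v w r
    by (simp_all add: X_def Y_def)
  moreover have "inner X v = - r/4" "inner Y v = - r/4"
    using v w by (simp_all add: X_def Y_def inner_diff_left inner_minus_left inner_commute[of w v] dot_square_norm)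
  ultimately have "{c, c + X, c + Y} \<subseteq> S"
    using r by (auto simp: S_def dist_norm inner_add_left)
  moreover have "convex S"
    unfolding S_def using convex_halfspace_gt[of "inner c v - r/2" v] convex_halfspace_le[of v "inner c v"]
    by (auto simp: inner_commute Collect_conj_eq intro!: convex_Int convex_cball)
  ultimately have "convex hull {c, c + X, c + Y} \<subseteq> S" by (rule hull_minimal)
  also have "S \<subseteq> K \<inter> {x. inner c v - r/2 < inner x v \<and> inner x v \<le> inner c v}"
    using r by (auto simp: S_def)
  finally have "measure lebesgue (convex hull {c, c + X, c + Y}) \<le>
      measure lebesgue (K \<inter> {x. inner c v - r/2 < inner x v \<and> inner x v \<le> inner c v})"
    using slab_lmeasurable by (intro measure_mono_fmeasurable fmeasurableD[OF triangle_lmeasurable])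
  also have "\<dots> = cut_area v (inner c v) - cut_area v (inner c v - r/2)"
    using cut_area_diff[of "inner c v - r/2" "inner c v" v] r by simp
  moreover have "measure lebesgue (convex hull {c, c + X, c + Y}) = r\<^sup>2 / 8"
    unfolding X_def Y_def measure_triangle_orthonormal[OF v w]
    by (simp add: power2_eq_square abs_mult)
  ultimately show ?thesis by simp
qed

lemma ball_centre_in_deeper_core:
  assumes "0 < r" "cball c r \<subseteq> K" "cball c r \<subseteq> core a"
  shows "c \<in> core (a + r\<^sup>2 / (8 * area))"
proof (clarsimp simp: core_def)
  fix v :: "real^2" assume v: "norm v = 1"
  have "c - (r/2) *\<^sub>R v \<in> core a" using assms(1,3) v by (auto simp: dist_norm)
  then have "a * area \<le> cut_area v (inner c v - r/2)"
    using v by (auto simp: core_def inner_diff_left dot_square_norm)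
  then show "(a + r\<^sup>2 / (8 * area)) * area \<le> cut_area v (inner c v)"
    using cut_area_gain_at_ball[OF assms(1,2) v] area_pos by (simp add: algebra_simps)
qed

lemma cut_area_at_point_lipschitz_direction:
  assumes m: "m \<in> K" and v: "norm v = 1" and v': "norm v' = 1"
  shows "cut_area v (inner m v) \<le> cut_area v' (inner m v') + 4 * radius\<^sup>2 * norm (v - v')"
proof -
  have "\<bar>inner m v - inner m v'\<bar> \<le> radius * norm (v - v')"
    using Cauchy_Schwarz_ineq2[of m "v - v'"] norm_le_radius[OF m]
    by (simp add: inner_diff_right mult_right_mono order_trans[OF _ mult_right_mono])
  then have "cut_area v' (inner m v) \<le> cut_area v' (inner m v') + 2 * radius * (radius * norm (v - v'))"
    using dist_cut_area_le[OF v', of "inner m v" "inner m v'"] radius_pos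
    by (simp add: dist_real_def) (smt (verit) mult_left_mono)
  moreover have "cut_area v (inner m v) \<le> cut_area v' (inner m v) + 2 * radius\<^sup>2 * norm (v - v')"
    by (rule cut_area_direction_le[OF v v'])
  ultimately show ?thesis by (simp add: power2_eq_square algebra_simps)
qed

lemma core_non_interior_point_on_section:
  assumes a: "0 < a" and m: "m \<in> core a" "m \<notin> interior (core a)"
  obtains v where "norm v = 1" "cut_area v (inner m v) = a * area"
proof (rule ccontr)
  assume no_section: "\<not> thesis"
  define f where "f v = cut_area v (inner m v)" for v
  have mK: "m \<in> K" using m(1) core_subset[OF a] by blast
  have "(4 * radius\<^sup>2)-lipschitz_on (sphere 0 1) f"
  proof (rule lipschitz_onI)
    fix v v' :: "real^2" assume "v \<in> sphere 0 1" "v' \<in> sphere 0 1"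
    then show "dist (f v) (f v') \<le> 4 * radius\<^sup>2 * dist v v'"
      using cut_area_at_point_lipschitz_direction[OF mK, of v v']
        cut_area_at_point_lipschitz_direction[OF mK, of v' v]
      by (auto simp: f_def dist_real_def dist_norm norm_minus_commute abs_le_iff)
  qed simp
  then have "continuous_on (sphere 0 1) f" by (rule lipschitz_on_continuous_on)
  then obtain v0 where v0: "v0 \<in> sphere 0 1" "\<And>v. v \<in> sphere 0 1 \<Longrightarrow> f v0 \<le> f v"
    using continuous_attains_inf[OF compact_sphere] by (metis norm_axis_1 mem_sphere_0 sphere_empty empty_iff)
  define \<delta> where "\<delta> = f v0 - a * area"
  have "a * area \<le> f v0" using m(1) v0(1) by (simp add: f_def core_cut_area_ge)
  moreover have "f v0 \<noteq> a * area" using no_section that v0(1) by (auto simp: f_def)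
  ultimately have \<delta>: "0 < \<delta>" by (simp add: \<delta>_def)
  have "cball m (\<delta> / (2 * radius)) \<subseteq> core a"
    using v0(2) by (intro cball_subset_core) (simp add: \<delta>_def f_def)
  then have "m \<in> interior (core a)"
    using \<delta> radius_pos by (intro mem_interior_cball[THEN iffD2]) (auto intro!: exI[of _ "\<delta> / (2 * radius)"])
  then show False using m(2) by simp
qed

subsection \<open>A boundary point of a core bisects its section\<close>

lemma tilted_cut_above_section_lower_bound:
  assumes w: "norm w = 1" and p: "p \<in> K" and z: "z \<in> K" "0 < d" "inner (z - p) v = - d"
    and lower: "\<And>y. y \<in> K \<Longrightarrow> inner (y - p) v = 0 \<Longrightarrow> - r \<le> inner (y - p) w"
    and \<tau>: "0 < \<tau>" "\<tau> * (8 * radius\<^sup>2) \<le> (L - r) * d"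
    and x: "x \<in> K" "0 < inner (x - p) v" "inner (x - p) v + \<tau> * inner (x - p) w \<le> 0"
  shows "- L \<le> inner (x - p) w"
proof (rule ccontr)
  define s u where "s = inner (x - p) w" and "u = inner (x - p) v"
  assume "\<not> - L \<le> inner (x - p) w"
  then have "s < - L" by (simp add: s_def)
  have "u \<le> \<tau> * (2 * radius)"
    using x(3) abs_inner_diff_le_radius[OF x(1) p w] \<tau>(1) mult_left_mono[of "- s" "2 * radius" \<tau>]
    by (simp add: s_def u_def abs_le_iff)
  \<comment> \<open>The segment from x to z meets the section at a point y with \<open>\<langle>y - p, w\<rangle> = s + O(\<tau>) < -r\<close>.\<close>
  define \<mu> where "\<mu> = u / (u + d)"
  have \<mu>: "0 < \<mu>" "\<mu> < 1" "\<mu> \<le> u / d" using x z by (auto simp: \<mu>_def u_def frac_le)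
  define y where "y = (1 - \<mu>) *\<^sub>R x + \<mu> *\<^sub>R z"
  have yK: "y \<in> K" unfolding y_def using x z \<mu> by (intro convexD[OF convex_K]) auto
  have yp: "y - p = (1 - \<mu>) *\<^sub>R (x - p) + \<mu> *\<^sub>R (z - p)" by (simp add: y_def algebra_simps)
  have "inner (y - p) v = (1 - \<mu>) * u - \<mu> * d" unfolding yp u_def using z(3) by (simp add: inner_add_left)
  also have "\<dots> = 0" using x z by (simp add: \<mu>_def u_def field_simps)
  finally have "- r \<le> inner (y - p) w" by (rule lower[OF yK])
  also have "inner (y - p) w = s + \<mu> * (inner (z - p) w - s)"
    unfolding yp s_def by (simp add: inner_add_left right_diff_distrib left_diff_distrib)
  also have "\<mu> * (inner (z - p) w - s) \<le> \<mu> * (4 * radius)"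
    using abs_inner_diff_le_radius[OF z(1) p w] abs_inner_diff_le_radius[OF x(1) p w] \<mu>(1)
    by (intro mult_left_mono) (auto simp: s_def abs_le_iff)
  also have "\<dots> \<le> \<tau> * (2 * radius) / d * (4 * radius)"
  proof (rule mult_right_mono)
    show "\<mu> \<le> \<tau> * (2 * radius) / d"
      using \<mu>(3) z(2) \<open>u \<le> \<tau> * (2 * radius)\<close> by (meson divide_right_mono less_imp_le order_trans)
  qed (use radius_pos in simp)
  also have "\<dots> \<le> L - r"
    using \<tau>(2) z(2) by (simp add: field_simps power2_eq_square)
  finally show False using \<open>s < - L\<close> by simp
qed

lemma mem_tilted_triangle:
  fixes v w :: "real^2"
  assumes v: "norm v = 1" and w: "norm w = 1" "inner v w = 0" and \<tau>: "0 < \<tau>"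
    and x: "0 < inner (x - p) v" "inner (x - p) v + \<tau> * inner (x - p) w \<le> 0" "- L \<le> inner (x - p) w"
  shows "x \<in> convex hull {p, p + ((- L) *\<^sub>R w + 0 *\<^sub>R v), p + ((- L) *\<^sub>R w + (\<tau> * L) *\<^sub>R v)}"
proof -
  define s u where "s = inner (x - p) w" and "u = inner (x - p) v"
  have "\<tau> * s < 0" using x(1,2) by (simp add: s_def u_def)
  then have L: "0 < L" using x(3) \<tau> by (simp add: s_def mult_less_0_iff)
  define l1 l2 where "l1 = - s / L - u / (\<tau> * L)" and "l2 = u / (\<tau> * L)"
  have "l1 *\<^sub>R ((- L) *\<^sub>R w + 0 *\<^sub>R v) + l2 *\<^sub>R ((- L) *\<^sub>R w + (\<tau> * L) *\<^sub>R v) =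
      (- L * (l1 + l2)) *\<^sub>R w + (\<tau> * L * l2) *\<^sub>R v"
    by (simp add: algebra_simps)
  also have "\<dots> = s *\<^sub>R w + u *\<^sub>R v" using L \<tau> by (simp add: l1_def l2_def field_simps)
  finally have "x = p + l1 *\<^sub>R ((- L) *\<^sub>R w + 0 *\<^sub>R v) + l2 *\<^sub>R ((- L) *\<^sub>R w + (\<tau> * L) *\<^sub>R v)"
    using orthonormal_vec2_expand[OF v w, of "x - p"] unfolding s_def u_def
    by (metis add.assoc add.commute diff_add_cancel)
  moreover have "0 \<le> l1" using x(2) \<tau> L by (simp add: l1_def s_def u_def field_simps)
  moreover have "0 \<le> l2" "l1 + l2 \<le> 1"
    using x(1,3) \<tau> L by (simp_all add: l1_def l2_def s_def u_def field_simps)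
  ultimately show ?thesis unfolding mem_convex_hull_3_offsets by blast
qed

lemma tilted_cut_subset:
  assumes v: "norm v = 1" and w: "norm w = 1" "inner v w = 0"
    and p: "p \<in> K" and z: "z \<in> K" "0 < d" "inner (z - p) v = - d"
    and lower: "\<And>y. y \<in> K \<Longrightarrow> inner (y - p) v = 0 \<Longrightarrow> - r \<le> inner (y - p) w"
    and \<tau>: "0 < \<tau>" "\<tau> * (8 * radius\<^sup>2) \<le> (L - r) * d"
    and e: "0 < inner (e - p) (v + \<tau> *\<^sub>R w)" and q: "0 < inner (q - p) (v + \<tau> *\<^sub>R w)"
  shows "K \<inter> {x. inner (x - p) (v + \<tau> *\<^sub>R w) \<le> 0} \<subseteq>
    (K \<inter> {x. inner (x - p) v \<le> 0} - convex hull {p, e, q}) \<union> {p} \<union>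
    convex hull {p, p + ((- L) *\<^sub>R w + 0 *\<^sub>R v), p + ((- L) *\<^sub>R w + (\<tau> * L) *\<^sub>R v)}"
proof
  fix x assume "x \<in> K \<inter> {x. inner (x - p) (v + \<tau> *\<^sub>R w) \<le> 0}"
  then have x: "x \<in> K" "inner (x - p) (v + \<tau> *\<^sub>R w) \<le> 0" by auto
  consider "x = p" | "0 < inner (x - p) v" | "x \<noteq> p" "inner (x - p) v \<le> 0" by linarith
  then show "x \<in> (K \<inter> {x. inner (x - p) v \<le> 0} - convex hull {p, e, q}) \<union> {p} \<union>
    convex hull {p, p + ((- L) *\<^sub>R w + 0 *\<^sub>R v), p + ((- L) *\<^sub>R w + (\<tau> * L) *\<^sub>R v)}"
  proof cases
    case 2
    moreover have "- L \<le> inner (x - p) w"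
      using x 2 by (intro tilted_cut_above_section_lower_bound[OF w(1) p z lower \<tau>]) (auto simp: inner_add_right)
    ultimately show ?thesis
      using x by (intro UnI2 mem_tilted_triangle[OF v w \<tau>(1)]) (auto simp: inner_add_right)
  next
    case 3
    then show ?thesis using convex_hull_3_inner_pos[OF e q _ x(2)] x(1) by blast
  qed simp
qed

lemma tilted_cut_measure_le:
  assumes v: "norm v = 1" and w: "norm w = 1" "inner v w = 0"
    and p: "p \<in> K" and z: "z \<in> K" "0 < d" "inner (z - p) v = - d"
    and lower: "\<And>y. y \<in> K \<Longrightarrow> inner (y - p) v = 0 \<Longrightarrow> - r \<le> inner (y - p) w"
    and \<tau>: "0 < \<tau>" "\<tau> * (8 * radius\<^sup>2) \<le> (L - r) * d"
    and e: "e \<in> K" "inner (e - p) v = 0" "0 < inner (e - p) w"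
    and q: "q \<in> K" "inner (q - p) v = - h" "0 < h" "0 < inner (q - p) (v + \<tau> *\<^sub>R w)"
  shows "measure lebesgue (K \<inter> {x. inner (x - p) (v + \<tau> *\<^sub>R w) \<le> 0}) \<le>
    cut_area v (inner p v) - inner (e - p) w * h / 2 + \<tau> * L\<^sup>2 / 2"
proof -
  define H T D where "H = K \<inter> {x. inner (x - p) v \<le> 0}" and "T = convex hull {p, e, q}"
    and "D = convex hull {p, p + ((- L) *\<^sub>R w + 0 *\<^sub>R v), p + ((- L) *\<^sub>R w + (\<tau> * L) *\<^sub>R v)}"
  have "H = K \<inter> {x. inner v x \<le> inner v p}" by (auto simp: H_def inner_diff_right inner_commute[of _ v])
  then have "convex H" by (simp add: convex_Int convex_K convex_halfspace_le)
  then have TH: "T \<subseteq> H" unfolding T_def using p e q by (intro hull_minimal) (auto simp: H_def)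
  have frame: "y = p + (inner (y - p) w *\<^sub>R w + inner (y - p) v *\<^sub>R v)" for y
    using orthonormal_vec2_expand[OF v w, of "y - p"] by (simp add: algebra_simps)
  have "T = convex hull {p, p + (inner (e - p) w *\<^sub>R w + 0 *\<^sub>R v), p + (inner (q - p) w *\<^sub>R w + (- h) *\<^sub>R v)}"
    unfolding T_def using frame[of e] frame[of q] e(2) q(2) by simp
  then have "measure lebesgue T = \<bar>inner (e - p) w * (- h) - 0 * inner (q - p) w\<bar> / 2"
    by (simp only: measure_triangle_orthonormal[OF v w])
  then have "measure lebesgue T = inner (e - p) w * h / 2" using e(3) q(3) by (simp add: abs_mult)
  moreover have "measure lebesgue D = \<tau> * L\<^sup>2 / 2"
    unfolding D_def measure_triangle_orthonormal[OF v w] using \<tau> by (simp add: abs_mult power2_eq_square)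
  moreover have "measure lebesgue H = cut_area v (inner p v)" by (simp add: H_def cut_area_def inner_diff_left)
  moreover have N: "K \<inter> {x. inner (x - p) (v + \<tau> *\<^sub>R w) \<le> 0} \<subseteq> (H - T) \<union> {p} \<union> D"
    unfolding H_def T_def D_def
    by (rule tilted_cut_subset[OF v w p z lower \<tau>])
       (use e(2,3) \<tau>(1) q(4) in \<open>simp_all add: inner_add_right\<close>)
  ultimately show ?thesis
    using measure_subset_diff_add[OF N TH cut_at_point_lmeasurable] cut_at_point_lmeasurable triangle_lmeasurable
    by (simp add: H_def T_def D_def)
qed

lemma unbalanced_chord_tilt:
  assumes v: "norm v = 1" and w: "norm w = 1" "inner v w = 0"
    and p: "p \<in> K" and level: "0 < cut_area v (inner p v)"
    and lower: "\<And>y. y \<in> K \<Longrightarrow> inner (y - p) v = 0 \<Longrightarrow> - r \<le> inner (y - p) w"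
    and e: "e \<in> K" "inner (e - p) v = 0" "r < inner (e - p) w"
  obtains n where "n \<noteq> 0" "measure lebesgue (K \<inter> {x. inner (x - p) n \<le> 0}) < cut_area v (inner p v)"
proof -
  define \<rho> where "\<rho> = inner (e - p) w"
  have "0 \<le> r" using lower[OF p] by simp
  obtain z where z: "z \<in> K" "inner z v < inner p v" by (rule cut_area_pos_imp_below[OF v level])
  define d sz where "d = inner (p - z) v" and "sz = inner (z - p) w"
  have d: "0 < d" "inner (z - p) v = - d" using z(2) by (simp_all add: d_def inner_diff_left)
  define L \<kappa> where "L = (r + \<rho>) / 2" and "\<kappa> = (1 + (L / \<rho>)\<^sup>2) / 2"
  have L: "r < L" "L < \<rho>" "0 < L" using e(3) \<open>0 \<le> r\<close> by (simp_all add: L_def \<rho>_def)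
  then have "(L / \<rho>)\<^sup>2 < 1" by (simp add: power_less_one_iff)
  moreover have "\<kappa> * \<rho>\<^sup>2 = (\<rho>\<^sup>2 + L\<^sup>2) / 2" using L by (simp add: \<kappa>_def field_simps)
  ultimately have \<kappa>: "0 < \<kappa>" "\<kappa> < 1" "L\<^sup>2 < \<kappa> * \<rho>\<^sup>2"
    using L by (simp_all add: \<kappa>_def add_pos_nonneg power_strict_mono)
  have "\<forall>\<^sub>F \<tau> in at_right 0. 0 < \<tau> \<and> \<tau> * (8 * radius\<^sup>2) < (L - r) * d \<and> \<tau> * (\<kappa> * \<rho>) < d
      \<and> \<tau> * (\<kappa> * \<rho> * (\<rho> - sz)) < (1 - \<kappa>) * \<rho> * d"
    using L d \<kappa> by (intro eventually_conj eventually_at_right_less eventually_at_right_0_mult_less) auto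
  then obtain \<tau> where \<tau>: "0 < \<tau>" "\<tau> * (8 * radius\<^sup>2) < (L - r) * d" "\<tau> * (\<kappa> * \<rho>) < d"
      "\<tau> * (\<kappa> * \<rho> * (\<rho> - sz)) < (1 - \<kappa>) * \<rho> * d"
    using eventually_happens'[OF trivial_limit_at_right_real] by blast
  \<comment> \<open>q lies below the section, at depth \<kappa>\<tau>\<rho> under e, yet above the line tilted by \<tau>.\<close>
  define \<mu> where "\<mu> = \<kappa> * \<tau> * \<rho> / d"
  have \<mu>: "0 < \<mu>" "\<mu> < 1" "\<mu> * (\<rho> - sz) < (1 - \<kappa>) * \<rho>" "\<mu> * d = \<kappa> * \<tau> * \<rho>"
    using \<tau> \<kappa> L d by (simp_all add: \<mu>_def field_simps)
  define q where "q = (1 - \<mu>) *\<^sub>R e + \<mu> *\<^sub>R z"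
  have qK: "q \<in> K" unfolding q_def using e(1) z(1) \<mu> by (intro convexD[OF convex_K]) auto
  have "q - p = (1 - \<mu>) *\<^sub>R (e - p) + \<mu> *\<^sub>R (z - p)" by (simp add: q_def algebra_simps)
  then have q: "inner (q - p) v = - (\<kappa> * \<tau> * \<rho>)" "inner (q - p) w = (1 - \<mu>) * \<rho> + \<mu> * sz"
    using e(2) d(2) \<mu>(4) by (simp_all add: inner_add_left \<rho>_def sz_def)
  have "inner (q - p) (v + \<tau> *\<^sub>R w) = \<tau> * ((1 - \<kappa>) * \<rho> - \<mu> * (\<rho> - sz))"
    unfolding inner_add_right inner_scaleR_right q by (simp add: algebra_simps)
  then have "0 < inner (q - p) (v + \<tau> *\<^sub>R w)" using \<mu>(3) \<tau>(1) by simp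
  moreover have "0 < inner (e - p) w" "0 < \<kappa> * \<tau> * \<rho>" using L \<kappa> \<tau> by (simp_all add: \<rho>_def)
  ultimately have "measure lebesgue (K \<inter> {x. inner (x - p) (v + \<tau> *\<^sub>R w) \<le> 0}) \<le>
      cut_area v (inner p v) - \<rho> * (\<kappa> * \<tau> * \<rho>) / 2 + \<tau> * L\<^sup>2 / 2"
    unfolding \<rho>_def
    by (intro tilted_cut_measure_le[OF v w p z(1) d lower \<tau>(1) less_imp_le[OF \<tau>(2)] e(1,2) _ qK
      q(1)[unfolded \<rho>_def]])
  also have "\<dots> < cut_area v (inner p v)" using \<kappa>(3) \<tau>(1) by (simp add: power2_eq_square mult.left_commute)
  finally have "measure lebesgue (K \<inter> {x. inner (x - p) (v + \<tau> *\<^sub>R w) \<le> 0}) < cut_area v (inner p v)" .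
  moreover have "inner v (v + \<tau> *\<^sub>R w) = 1" using v w by (simp add: inner_add_right dot_square_norm)
  ultimately show ?thesis using that[of "v + \<tau> *\<^sub>R w"] by fastforce
qed

lemma cut_area_normalize:
  assumes "n \<noteq> 0"
  shows "cut_area (n /\<^sub>R norm n) (inner p (n /\<^sub>R norm n)) = measure lebesgue (K \<inter> {x. inner (x - p) n \<le> 0})"
proof -
  have "{x. inner x (n /\<^sub>R norm n) \<le> inner p (n /\<^sub>R norm n)} = {x. inner (x - p) n \<le> 0}"
    using assms by (auto simp: divide_le_cancel inner_diff_left)
  then show ?thesis by (simp add: cut_area_def)
qed

lemma core_section_chord_le:
  assumes a: "0 < a" and v: "norm v = 1" and w: "norm w = 1" "inner v w = 0"
    and p: "p \<in> core a" and level: "cut_area v (inner p v) = a * area"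
    and lower: "\<And>y. y \<in> K \<Longrightarrow> inner (y - p) v = 0 \<Longrightarrow> - r \<le> inner (y - p) w"
    and e: "e \<in> K" "inner (e - p) v = 0"
  shows "inner (e - p) w \<le> r"
proof (rule ccontr)
  assume "\<not> inner (e - p) w \<le> r"
  moreover have "0 < cut_area v (inner p v)" using level a area_pos by simp
  moreover have "p \<in> K" using p core_subset[OF a] by blast
  ultimately obtain n where n: "n \<noteq> 0" "measure lebesgue (K \<inter> {x. inner (x - p) n \<le> 0}) < a * area"
    using unbalanced_chord_tilt[OF v w _ _ lower e] level by (metis not_le)
  then show False
    using core_cut_area_ge[OF p, of "n /\<^sub>R norm n"] cut_area_normalize[OF n(1), of p] by simp
qed

lemma core_section_midpoint:
  assumes a: "0 < a" and v: "norm v = 1" and w: "norm w = 1" "inner v w = 0"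
    and p: "p \<in> core a" and level: "cut_area v (inner p v) = a * area"
    and e1: "e1 \<in> K" "inner e1 v = inner p v" and e2: "e2 \<in> K" "inner e2 v = inner p v"
    and extreme: "\<And>y. y \<in> K \<Longrightarrow> inner y v = inner p v \<Longrightarrow> inner e1 w \<le> inner y w \<and> inner y w \<le> inner e2 w"
  shows "2 * inner p w = inner e1 w + inner e2 w"
proof -
  have "inner (e2 - p) w \<le> inner (p - e1) w"
    using extreme e1 e2
    by (intro core_section_chord_le[OF a v w p level]) (auto simp: inner_diff_left)
  moreover have "inner (e1 - p) (- w) \<le> inner (e2 - p) w"
    using extreme e1 e2 w
    by (intro core_section_chord_le[OF a v _ _ p level]) (auto simp: inner_diff_left)
  ultimately show ?thesis by (simp add: inner_diff_left)
qed

lemma core_points_on_section_eq: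
  assumes a: "0 < a" and v: "norm v = 1"
    and p: "p \<in> core a" "p' \<in> core a" "inner p' v = inner p v"
    and level: "cut_area v (inner p v) = a * area"
  shows "p = p'"
proof -
  obtain w where w: "norm w = 1" "inner v w = 0" by (rule unit_vec2_orthogonal_unit[OF v])
  define C where "C = K \<inter> {x. inner x v = inner p v}"
  have "compact C" unfolding C_def
    using closed_hyperplane[of v "inner p v"] by (intro compact_Int_closed compact_K) (simp add: inner_commute)
  moreover have "p \<in> C" using p core_subset[OF a] by (auto simp: C_def)
  moreover have "continuous_on C (\<lambda>x. inner x w)" by (intro continuous_intros)
  ultimately obtain e1 e2 where "e1 \<in> C" "\<forall>y\<in>C. inner e1 w \<le> inner y w" "e2 \<in> C" "\<forall>y\<in>C. inner y w \<le> inner e2 w"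
    using continuous_attains_inf[of C "\<lambda>x. inner x w"] continuous_attains_sup[of C "\<lambda>x. inner x w"] by blast
  then have "2 * inner p w = inner e1 w + inner e2 w" "2 * inner p' w = inner e1 w + inner e2 w"
    using p level by (auto simp: C_def intro!: core_section_midpoint[OF a v w])
  then have "inner p w = inner p' w" by simp
  then have "inner (p - p') w *\<^sub>R w + inner (p - p') v *\<^sub>R v = 0"
    using p(3) by (simp add: inner_diff_left)
  then show ?thesis using orthonormal_vec2_expand[OF v w, of "p - p'"] by simp
qed

lemma core_above_section:
  assumes v: "norm v = 1" and a: "0 < a" "a < 1"
    and level: "cut_area v (inner m v) = a * area" and x: "x \<in> core a"
  shows "inner m v \<le> inner x v"
proof (rule ccontr)
  assume "\<not> inner m v \<le> inner x v"
  moreover have "a * area \<le> cut_area v (inner x v)" using x v by (rule core_cut_area_ge)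
  moreover from this have "0 < cut_area v (inner x v)"
    using a area_pos by (smt (verit) mult_pos_pos)
  moreover have "cut_area v (inner m v) < area" using a area_pos level by simp
  ultimately have "cut_area v (inner x v) < cut_area v (inner m v)"
    by (intro cut_area_strict_mono[OF v]) auto
  then show False using level \<open>a * area \<le> cut_area v (inner x v)\<close> by simp
qed

lemma strictly_convex_core:
  assumes a: "0 < a" "a < 1"
  shows "strictly_convex (core a)"
  unfolding strictly_convex_def
proof (intro conjI convex_core allI impI notI)
  fix x y assume "x \<noteq> y" and seg: "closed_segment x y \<subseteq> frontier (core a)"
  have "x \<in> frontier (core a)" "y \<in> frontier (core a)" "midpoint x y \<in> frontier (core a)"
    using seg ends_in_segment[of x y] midpoint_in_closed_segment[of x y] by blast+
  then have xy: "x \<in> core a" "y \<in> core a" "midpoint x y \<in> core a" "midpoint x y \<notin> interior (core a)"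
    using frontier_subset_closed[OF closed_core, of a] by (auto simp: frontier_def)
  obtain v where v: "norm v = 1" and level: "cut_area v (inner (midpoint x y) v) = a * area"
    by (rule core_non_interior_point_on_section[OF a(1) xy(3,4)])
  have "inner (midpoint x y) v \<le> inner x v" "inner (midpoint x y) v \<le> inner y v"
    by (rule core_above_section[OF v a level xy(1)], rule core_above_section[OF v a level xy(2)])
  moreover have "inner (midpoint x y) v = (inner x v + inner y v) / 2"
    by (simp add: midpoint_def inner_add_left)
  ultimately have "inner x v = inner (midpoint x y) v \<and> inner y v = inner x v" by argo
  then have "x = y" using core_points_on_section_eq[OF a(1) v xy(1,2)] level by presburger
  then show False using \<open>x \<noteq> y\<close> by simp
qed

subsection \<open>The critical level\<close>

definition critical_level :: real where
  "critical_level = Sup {a. 0 < a \<and> a < 1 \<and> core a \<noteq> {}}"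

lemma critical_level_pos: "0 < critical_level" and critical_level_le_half: "critical_level \<le> 1/2"
    and core_nonempty_below_critical: "\<And>a. a < critical_level \<Longrightarrow> \<exists>b>a. b < 1 \<and> core b \<noteq> {}"
    and core_empty_above_critical: "\<And>a. critical_level < a \<Longrightarrow> a < 1 \<Longrightarrow> core a = {}"
proof -
  define S where "S = {a. 0 < a \<and> a < 1 \<and> core a \<noteq> {}}"
  have S_half: "a \<le> 1/2" if "a \<in> S" for a using that core_empty_above_half[of a] by (force simp: S_def)
  then have bdd: "bdd_above S" by (intro bdd_aboveI)
  obtain c r where r: "0 < r" "cball c r \<subseteq> K" using interior_K by (auto simp: mem_interior_cball)
  have "cball c r \<subseteq> core 0" using cut_area_nonneg by (simp add: core_def)
  then have "c \<in> core (r\<^sup>2 / (8 * area))" using ball_centre_in_deeper_core[OF r] by fastforce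
  then have a0: "min (1/4) (r\<^sup>2 / (8 * area)) \<in> S"
    using core_antimono[of "min (1/4) (r\<^sup>2 / (8 * area))" "r\<^sup>2 / (8 * area)"] r(1) area_pos
    by (auto simp: S_def)
  have crit: "critical_level = Sup S" by (simp add: critical_level_def S_def)
  show pos: "0 < critical_level"
    using cSup_upper[OF a0 bdd] a0 unfolding crit by (auto simp: S_def)
  show "critical_level \<le> 1/2"
    unfolding crit using a0 S_half by (intro cSup_least) auto
  show "\<exists>b>a. b < 1 \<and> core b \<noteq> {}" if a: "a < critical_level" for a
  proof -
    obtain b where "b \<in> S" "a < b" using a less_cSup_iff[of S a] a0 bdd unfolding crit by blast
    then show ?thesis by (auto simp: S_def)
  qed
  show "core a = {}" if "critical_level < a" "a < 1" for a
  proof (rule ccontr)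
    assume "core a \<noteq> {}"
    then have "a \<in> S" using that pos by (simp add: S_def)
    then show False using cSup_upper[OF _ bdd, of a] that unfolding crit by simp
  qed
qed

lemma interior_core_below_critical:
  assumes "0 < a" "a < critical_level"
  shows "interior (core a) \<noteq> {}"
proof -
  obtain b x where "a < b" "x \<in> core b" using core_nonempty_below_critical[OF assms(2)] by blast
  then have "cball x ((b - a) * area / (2 * radius)) \<subseteq> core a" by (rule cball_subset_core_gap)
  moreover have "0 < (b - a) * area / (2 * radius)" using \<open>a < b\<close> area_pos radius_pos by simp
  ultimately have "x \<in> interior (core a)" unfolding mem_interior_cball by blast
  then show ?thesis by blast
qed

lemma INT_core_below_subset:
  assumes "0 < c"
  shows "(\<Inter>b\<in>{c/2 ..< c}. core b) \<subseteq> core c"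
proof
  fix x assume x: "x \<in> (\<Inter>b\<in>{c/2 ..< c}. core b)"
  show "x \<in> core c" unfolding core_def
  proof (intro CollectI allI impI)
    fix v :: "real^2" assume v: "norm v = 1"
    show "c * area \<le> cut_area v (inner x v)"
    proof (rule dense_le_bounded[of "c / 2 * area"])
      show "c / 2 * area < c * area" using assms area_pos by simp
      fix y assume "c / 2 * area < y" "y < c * area"
      then have "y / area \<in> {c/2 ..< c}" using area_pos by (simp add: field_simps)
      then have "y / area * area \<le> cut_area v (inner x v)" using x v by (blast intro: core_cut_area_ge)
      then show "y \<le> cut_area v (inner x v)" using area_pos by simp
    qed
  qed
qed

lemma core_critical_nonempty: "core critical_level \<noteq> {}"
proof -
  define \<F> where "\<F> = core ` {critical_level / 2 ..< critical_level}"
  have "\<Inter>\<F> \<noteq> {}"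
  proof (rule compact_chain)
    show "compact S" if "S \<in> \<F>" for S using that critical_level_pos compact_core by (auto simp: \<F>_def)
    have "core b \<noteq> {}" if b: "b < critical_level" for b
    proof -
      obtain b' where "b < b'" "core b' \<noteq> {}" using core_nonempty_below_critical[OF b] by blast
      then show ?thesis using core_antimono[of b b'] by auto
    qed
    then show "{} \<notin> \<F>" unfolding \<F>_def by (metis atLeastLessThan_iff imageE)
    show "S \<subseteq> T \<or> T \<subseteq> S" if ST: "S \<in> \<F> \<and> T \<in> \<F>" for S T
    proof -
      obtain b b' where "S = core b" "T = core b'" using ST by (auto simp: \<F>_def)
      then show ?thesis using core_antimono[of b b'] core_antimono[of b' b] by (cases "b \<le> b'") auto
    qed
  qed
  then show ?thesis using INT_core_below_subset[OF critical_level_pos] by (auto simp: \<F>_def)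
qed

lemma interior_core_critical: "interior (core critical_level) = {}"
proof (rule ccontr)
  assume "interior (core critical_level) \<noteq> {}"
  then obtain c r where r: "0 < r" "cball c r \<subseteq> core critical_level"
    using mem_interior_cball by blast
  moreover have "cball c r \<subseteq> K" using r core_subset[OF critical_level_pos] by blast
  ultimately have "c \<in> core (critical_level + r\<^sup>2 / (8 * area))"
    using ball_centre_in_deeper_core by blast
  moreover have "critical_level < critical_level + r\<^sup>2 / (8 * area)" using r area_pos by simp
  ultimately show False
    using core_empty_above_half[of "critical_level + r\<^sup>2 / (8 * area)"] core_empty_above_critical
    by (cases "critical_level + r\<^sup>2 / (8 * area) < 1") auto
qed

lemma core_critical_singleton: "\<exists>p. core critical_level = {p}"
proof -
  obtain p where p: "p \<in> core critical_level" using core_critical_nonempty by blast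
  have "strictly_convex (core critical_level)"
    using critical_level_pos critical_level_le_half by (intro strictly_convex_core) auto
  then have "core critical_level = {p}"
    using strictly_convex_interior_empty_imp_subsingleton[OF _ interior_core_critical _ p] p by blast
  then show ?thesis ..
qed

end

theorem mainTheorem8:
  fixes K :: "(real^2) set"
  assumes "compact K" and "convex K" and "interior K \<noteq> {}"
  shows "\<exists>\<alpha>K. 0 < \<alpha>K \<and> \<alpha>K \<le> 1/2 \<and>
     (\<forall>\<alpha>. 0 < \<alpha> \<and> \<alpha> < \<alpha>K \<longrightarrow>
        strictly_convex (alpha_core K \<alpha>) \<and> interior (alpha_core K \<alpha>) \<noteq> {}) \<and>
     (\<exists>p. alpha_core K \<alpha>K = {p}) \<and>
     (\<forall>\<alpha>. \<alpha>K < \<alpha> \<and> \<alpha> < 1 \<longrightarrow> alpha_core K \<alpha> = {})"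
proof -
  interpret convex_body K using assms by unfold_locales
  have half: "0 < critical_level" "critical_level \<le> 1/2"
    by (rule critical_level_pos, rule critical_level_le_half)
  have "strictly_convex (alpha_core K \<alpha>) \<and> interior (alpha_core K \<alpha>) \<noteq> {}"
    if "0 < \<alpha>" "\<alpha> < critical_level" for \<alpha>
    using that half alpha_core_eq_core[of \<alpha>] strictly_convex_core[of \<alpha>] interior_core_below_critical[of \<alpha>]
    by simp
  moreover have "\<exists>p. alpha_core K critical_level = {p}"
    using half alpha_core_eq_core[of critical_level] core_critical_singleton by simp
  moreover have "alpha_core K \<alpha> = {}" if "critical_level < \<alpha>" "\<alpha> < 1" for \<alpha>
    using that half alpha_core_eq_core[of \<alpha>] core_empty_above_critical[of \<alpha>] by simp
  ultimately show ?thesis using half by blast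
qed

end
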